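(* Let $(A;A^+)$ be an $\mathbb{F}_1$-algebra pair. Every projective $\mathbb{B}[A;A^+]$-module is isomorphic to $\mathbb{B}(M,\le)$ for some partially ordered $A$-module $(M,\le)$.
   Context: $(A;A^+)$: $A$ a commutative monoid with zero (multiplicative), $A^+\subseteq A$ a sharp submonoid containing $0$. $A$-modules are pointed sets with $A$-action ($0$ acts to the base point, base point fixed). $\mathbb{B}[A;A^+]$ is the idempotent semiring of finitely generated $A^+$-submodules of $A$ with $\vee$ = union and $+$ = elementwise product. A partially ordered $A$-module is an $A$-module with a partial order such that $fv\le gv$ whenever $f\in A^+g$, and $v\le w\Rightarrow fv\le fw$ for $f\in A$. $\mathbb{B}(M,\le)$ is the set of $A^+$-submodules of $M$ that are lower sets and are the downward closure of a finitely generated $A^+$-submodule, a $\mathbb{B}[A;A^+]$-module under union and elementwise multiplication. A module is projective if every surjection onto it has a section. *)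

theory Defs
  imports Main
begin

text \<open>A is the whole type 'a (a commutative monoid with zero); Ap is A+.\<close>

definition F1_pair :: "('a::{comm_monoid_mult, mult_zero}) set \<Rightarrow> bool" where
  "F1_pair Ap \<longleftrightarrow>
     1 \<in> Ap \<and> 0 \<in> Ap \<and> (\<forall>f\<in>Ap. \<forall>g\<in>Ap. f * g \<in> Ap) \<and>
     (\<forall>f\<in>Ap. \<forall>g\<in>Ap. f * g = 1 \<longrightarrow> f = 1 \<and> g = 1)"

definition fgA :: "'a::{comm_monoid_mult, mult_zero} set \<Rightarrow> 'a set \<Rightarrow> 'a set" where
  "fgA Ap G = insert 0 {f * g | f g. f \<in> Ap \<and> g \<in> G}"

text \<open>The idempotent semiring B[A;A+]: addition = union, multiplication = elementwise product.\<close>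
definition BA :: "'a::{comm_monoid_mult, mult_zero} set \<Rightarrow> 'a set set" where
  "BA Ap = {fgA Ap G | G. finite G}"

definition setmult :: "'a::{comm_monoid_mult, mult_zero} set \<Rightarrow> 'a set \<Rightarrow> 'a set" where
  "setmult S T = {s * t | s t. s \<in> S \<and> t \<in> T}"

record ('a, 'n) bmod =
  mcar :: "'n set"
  mjoin :: "'n \<Rightarrow> 'n \<Rightarrow> 'n"
  mzero :: "'n"
  mact :: "'a set \<Rightarrow> 'n \<Rightarrow> 'n"

definition is_bmod :: "'a::{comm_monoid_mult, mult_zero} set \<Rightarrow> ('a, 'n) bmod \<Rightarrow> bool" where
  "is_bmod Ap N \<longleftrightarrow>
     mzero N \<in> mcar N \<and>
     (\<forall>x\<in>mcar N. \<forall>y\<in>mcar N. mjoin N x y \<in> mcar N) \<and>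
     (\<forall>S\<in>BA Ap. \<forall>x\<in>mcar N. mact N S x \<in> mcar N) \<and>
     (\<forall>x\<in>mcar N. \<forall>y\<in>mcar N. \<forall>z\<in>mcar N. mjoin N (mjoin N x y) z = mjoin N x (mjoin N y z)) \<and>
     (\<forall>x\<in>mcar N. \<forall>y\<in>mcar N. mjoin N x y = mjoin N y x) \<and>
     (\<forall>x\<in>mcar N. mjoin N (mzero N) x = x) \<and>
     (\<forall>S\<in>BA Ap. \<forall>T\<in>BA Ap. \<forall>x\<in>mcar N. mact N (S \<union> T) x = mjoin N (mact N S x) (mact N T x)) \<and>
     (\<forall>S\<in>BA Ap. \<forall>x\<in>mcar N. \<forall>y\<in>mcar N. mact N S (mjoin N x y) = mjoin N (mact N S x) (mact N S y)) \<and>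
     (\<forall>S\<in>BA Ap. \<forall>T\<in>BA Ap. \<forall>x\<in>mcar N. mact N (setmult S T) x = mact N S (mact N T x)) \<and>
     (\<forall>x\<in>mcar N. mact N (fgA Ap {1}) x = x) \<and>
     (\<forall>x\<in>mcar N. mact N {0} x = mzero N) \<and>
     (\<forall>S\<in>BA Ap. mact N S (mzero N) = mzero N)"

definition bhom :: "'a::{comm_monoid_mult, mult_zero} set \<Rightarrow> ('a, 'n) bmod \<Rightarrow> ('a, 'm) bmod \<Rightarrow> ('n \<Rightarrow> 'm) \<Rightarrow> bool" where
  "bhom Ap N K h \<longleftrightarrow>
     (\<forall>x\<in>mcar N. h x \<in> mcar K) \<and>
     h (mzero N) = mzero K \<and>
     (\<forall>x\<in>mcar N. \<forall>y\<in>mcar N. h (mjoin N x y) = mjoin K (h x) (h y)) \<and>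
     (\<forall>S\<in>BA Ap. \<forall>x\<in>mcar N. h (mact N S x) = mact K S (h x))"

definition bmod_iso :: "'a::{comm_monoid_mult, mult_zero} set \<Rightarrow> ('a, 'n) bmod \<Rightarrow> ('a, 'm) bmod \<Rightarrow> bool" where
  "bmod_iso Ap N K \<longleftrightarrow> (\<exists>h. bhom Ap N K h \<and> bij_betw h (mcar N) (mcar K))"

text \<open>The source modules are taken
  with carriers in the type ('p => 'a set), which is large enough to contain the free
  module on the carrier of P (finitely supported functions to B[A;A+]).\<close>
definition projective :: "'a::{comm_monoid_mult, mult_zero} set \<Rightarrow> ('a, 'p) bmod \<Rightarrow> bool" where
  "projective Ap P \<longleftrightarrow> is_bmod Ap P \<and>
     (\<forall>(N :: ('a, 'p \<Rightarrow> 'a set) bmod) p.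
        is_bmod Ap N \<and> bhom Ap N P p \<and> p ` mcar N = mcar P \<longrightarrow>
        (\<exists>s. bhom Ap P N s \<and> (\<forall>x\<in>mcar P. p (s x) = x)))"

definition amod :: "'a::{comm_monoid_mult, mult_zero} itself \<Rightarrow> 'm set \<Rightarrow> 'm \<Rightarrow> ('a \<Rightarrow> 'm \<Rightarrow> 'm) \<Rightarrow> bool" where
  "amod _ M pt ac \<longleftrightarrow>
     pt \<in> M \<and> (\<forall>f. \<forall>x\<in>M. ac f x \<in> M) \<and>
     (\<forall>x\<in>M. ac 1 x = x) \<and> (\<forall>f g. \<forall>x\<in>M. ac (f * g) x = ac f (ac g x)) \<and>
     (\<forall>x\<in>M. ac 0 x = pt) \<and> (\<forall>f. ac f pt = pt)"

definition po_amod :: "'a::{comm_monoid_mult, mult_zero} set \<Rightarrow> 'm set \<Rightarrow> 'm \<Rightarrow> ('a \<Rightarrow> 'm \<Rightarrow> 'm) \<Rightarrow> ('m \<Rightarrow> 'm \<Rightarrow> bool) \<Rightarrow> bool" where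
  "po_amod Ap M pt ac le \<longleftrightarrow>
     amod TYPE('a) M pt ac \<and>
     (\<forall>x\<in>M. le x x) \<and>
     (\<forall>x\<in>M. \<forall>y\<in>M. le x y \<and> le y x \<longrightarrow> x = y) \<and>
     (\<forall>x\<in>M. \<forall>y\<in>M. \<forall>z\<in>M. le x y \<and> le y z \<longrightarrow> le x z) \<and>
     (\<forall>f g. \<forall>v\<in>M. (\<exists>h\<in>Ap. f = h * g) \<longrightarrow> le (ac f v) (ac g v)) \<and>
     (\<forall>f. \<forall>v\<in>M. \<forall>w\<in>M. le v w \<longrightarrow> le (ac f v) (ac f w))"

definition gen_sub :: "'a set \<Rightarrow> 'm \<Rightarrow> ('a \<Rightarrow> 'm \<Rightarrow> 'm) \<Rightarrow> 'm set \<Rightarrow> 'm set" where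
  "gen_sub Ap pt ac G = insert pt {ac h g | h g. h \<in> Ap \<and> g \<in> G}"

definition down :: "'m set \<Rightarrow> ('m \<Rightarrow> 'm \<Rightarrow> bool) \<Rightarrow> 'm set \<Rightarrow> 'm set" where
  "down M le S = {y \<in> M. \<exists>x\<in>S. le y x}"

definition BM :: "'a set \<Rightarrow> 'm set \<Rightarrow> 'm \<Rightarrow> ('a \<Rightarrow> 'm \<Rightarrow> 'm) \<Rightarrow> ('m \<Rightarrow> 'm \<Rightarrow> bool) \<Rightarrow> 'm set set" where
  "BM Ap M pt ac le =
     {S. S \<subseteq> M \<and> pt \<in> S \<and> (\<forall>h\<in>Ap. \<forall>x\<in>S. ac h x \<in> S) \<and>
         (\<forall>x\<in>S. \<forall>y\<in>M. le y x \<longrightarrow> y \<in> S) \<and>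
         (\<exists>G. finite G \<and> G \<subseteq> M \<and> S = down M le (gen_sub Ap pt ac G))}"

definition BM_mod :: "'a set \<Rightarrow> 'm set \<Rightarrow> 'm \<Rightarrow> ('a \<Rightarrow> 'm \<Rightarrow> 'm) \<Rightarrow> ('m \<Rightarrow> 'm \<Rightarrow> bool) \<Rightarrow> ('a, 'm set) bmod" where
  "BM_mod Ap M pt ac le =
     \<lparr> mcar = BM Ap M pt ac le,
       mjoin = (\<lambda>S T. S \<union> T),
       mzero = {pt},
       mact = (\<lambda>F S. down M le {ac f x | f x. f \<in> F \<and> x \<in> S}) \<rparr>"

end

theory Submission
  imports Defs
begin

text \<open>
  A \<open>B[A;A\<^sup>+]\<close>-module \<open>P\<close> is an idempotent commutative monoid, hence a join-semilattice
  with least element under \<open>x \<le> y \<longleftrightarrow> x \<or> y = y\<close>; letting \<open>f \<in> A\<close> act through the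
  principal submodule \<open>A\<^sup>+f\<close> makes \<open>(P, \<le>)\<close> a partially ordered \<open>A\<close>-module.
  Taking the supremum of a finitely generated down-set is a surjective homomorphism
  \<open>B(P, \<le>) \<rightarrow> P\<close>, so projectivity provides a section \<open>s\<close>. Put \<open>M = {x. x \<in> s x}\<close>.
  Since \<open>s\<close> preserves joins, the maximal elements of a finite generating set of \<open>s x\<close>
  lie in \<open>M\<close>; hence \<open>s x\<close> is the down-set of \<open>s x \<inter> M\<close>, and \<open>x \<mapsto> s x \<inter> M\<close> is an
  isomorphism \<open>P \<cong> B(M, \<le>)\<close>.
\<close>

section \<open>Finitely generated \<open>A\<^sup>+\<close>-submodules and \<open>B[A;A\<^sup>+]\<close>-modules\<close>

lemma F1_pairD:
  assumes "F1_pair Ap"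
  shows F1_pair_one: "1 \<in> Ap"
    and F1_pair_zero: "0 \<in> Ap"
    and F1_pair_mult: "f \<in> Ap \<Longrightarrow> g \<in> Ap \<Longrightarrow> f * g \<in> Ap"
  using assms unfolding F1_pair_def by auto

lemma fgA_empty [simp]: "fgA Ap {} = {0}"
  unfolding fgA_def by auto

lemma fgA_zero [simp]: "fgA Ap {0} = {0}"
  unfolding fgA_def by auto

lemma fgA_insert: "fgA Ap (insert h H) = fgA Ap {h} \<union> fgA Ap H"
  unfolding fgA_def by auto

lemma zero_in_fgA [simp]: "0 \<in> fgA Ap H"
  unfolding fgA_def by blast

lemma generator_in_fgA: "1 \<in> Ap \<Longrightarrow> h \<in> H \<Longrightarrow> h \<in> fgA Ap H"
  unfolding fgA_def by force

lemma fgA_memE: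
  assumes "f \<in> fgA Ap H"
  obtains "f = 0" | a h where "a \<in> Ap" "h \<in> H" "f = a * h"
  using assms unfolding fgA_def by blast

lemma fgA_in_BA: "finite G \<Longrightarrow> fgA Ap G \<in> BA Ap"
  unfolding BA_def by auto

lemma BA_obtain_list:
  assumes "F \<in> BA Ap"
  obtains hs where "F = fgA Ap (set hs)"
  using assms finite_list unfolding BA_def by blast

lemma setmult_fgA_singleton:
  assumes "F1_pair Ap"
  shows "setmult (fgA Ap {f}) (fgA Ap {g}) = fgA Ap {f * g}"
proof (intro set_eqI iffI)
  fix x assume "x \<in> setmult (fgA Ap {f}) (fgA Ap {g})"
  then obtain s t where x: "x = s * t" "s \<in> fgA Ap {f}" "t \<in> fgA Ap {g}"
    unfolding setmult_def by blast
  show "x \<in> fgA Ap {f * g}"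
  proof (cases "s = 0 \<or> t = 0")
    case False
    with x obtain a b where "a \<in> Ap" "b \<in> Ap" "x = (a * b) * (f * g)"
      by (auto elim!: fgA_memE simp: ac_simps)
    then show ?thesis
      using F1_pair_mult[OF assms] unfolding fgA_def by blast
  qed (use x in auto)
next
  fix x assume "x \<in> fgA Ap {f * g}"
  then consider "x = 0" | a where "a \<in> Ap" "x = (a * f) * (1 * g)"
    by (auto elim!: fgA_memE simp: ac_simps)
  then show "x \<in> setmult (fgA Ap {f}) (fgA Ap {g})"
  proof cases
    case 1
    then have "x = 0 * 0" by simp
    then show ?thesis unfolding setmult_def using zero_in_fgA by blast
  next
    case 2
    then show ?thesis
      using F1_pair_one[OF assms] unfolding setmult_def fgA_def by blast
  qed
qed

lemma fgA_singleton_mult_subset: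
  assumes "F1_pair Ap" and "a \<in> Ap"
  shows "fgA Ap {a * g} \<subseteq> fgA Ap {g}"
  using assms F1_pair_mult unfolding fgA_def by (force simp: mult.assoc)

lemma is_bmodD:
  assumes "is_bmod Ap N"
  shows bmod_zero_closed: "mzero N \<in> mcar N"
    and bmod_join_closed: "x \<in> mcar N \<Longrightarrow> y \<in> mcar N \<Longrightarrow> mjoin N x y \<in> mcar N"
    and bmod_act_closed: "S \<in> BA Ap \<Longrightarrow> x \<in> mcar N \<Longrightarrow> mact N S x \<in> mcar N"
    and bmod_join_assoc: "x \<in> mcar N \<Longrightarrow> y \<in> mcar N \<Longrightarrow> z \<in> mcar N \<Longrightarrow>
      mjoin N (mjoin N x y) z = mjoin N x (mjoin N y z)"
    and bmod_join_commute: "x \<in> mcar N \<Longrightarrow> y \<in> mcar N \<Longrightarrow> mjoin N x y = mjoin N y x"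
    and bmod_zero_join: "x \<in> mcar N \<Longrightarrow> mjoin N (mzero N) x = x"
    and bmod_act_union: "S \<in> BA Ap \<Longrightarrow> T \<in> BA Ap \<Longrightarrow> x \<in> mcar N \<Longrightarrow>
      mact N (S \<union> T) x = mjoin N (mact N S x) (mact N T x)"
    and bmod_act_join: "S \<in> BA Ap \<Longrightarrow> x \<in> mcar N \<Longrightarrow> y \<in> mcar N \<Longrightarrow>
      mact N S (mjoin N x y) = mjoin N (mact N S x) (mact N S y)"
    and bmod_act_setmult: "S \<in> BA Ap \<Longrightarrow> T \<in> BA Ap \<Longrightarrow> x \<in> mcar N \<Longrightarrow>
      mact N (setmult S T) x = mact N S (mact N T x)"
    and bmod_act_one: "x \<in> mcar N \<Longrightarrow> mact N (fgA Ap {1}) x = x"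
    and bmod_act_zero: "x \<in> mcar N \<Longrightarrow> mact N {0} x = mzero N"
    and bmod_act_mzero: "S \<in> BA Ap \<Longrightarrow> mact N S (mzero N) = mzero N"
  using assms unfolding is_bmod_def by meson+

lemma bhomD:
  assumes "bhom Ap N K h"
  shows bhom_closed: "x \<in> mcar N \<Longrightarrow> h x \<in> mcar K"
    and bhom_zero: "h (mzero N) = mzero K"
    and bhom_join: "x \<in> mcar N \<Longrightarrow> y \<in> mcar N \<Longrightarrow> h (mjoin N x y) = mjoin K (h x) (h y)"
    and bhom_act: "S \<in> BA Ap \<Longrightarrow> x \<in> mcar N \<Longrightarrow> h (mact N S x) = mact K S (h x)"
  using assms unfolding bhom_def by blast+

lemma bmod_iso_if_bij_bhom:
  assumes "is_bmod Ap N" and "bhom Ap N K h" and "bij_betw h (mcar N) (mcar K)"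
  shows "bmod_iso Ap K N"
proof -
  define g where "g = inv_into (mcar N) h"
  have g_bij: "bij_betw g (mcar K) (mcar N)"
    unfolding g_def by (rule bij_betw_inv_into[OF assms(3)])
  have g_h: "g (h x) = x" if "x \<in> mcar N" for x
    using that assms(3) unfolding g_def bij_betw_def by simp
  have h_g: "h (g y) = y" if "y \<in> mcar K" for y
    using that assms(3) unfolding g_def bij_betw_def by (simp add: f_inv_into_f)
  have g_in: "g y \<in> mcar N" if "y \<in> mcar K" for y
    using that g_bij by (rule bij_betw_apply[rotated])
  have "bhom Ap K N g"
    unfolding bhom_def
  proof (intro conjI ballI)
    show "g (mzero K) = mzero N"
      using g_h bhom_zero[OF assms(2)] bmod_zero_closed[OF assms(1)] by metis
  next
    fix y z assume "y \<in> mcar K" "z \<in> mcar K"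
    then show "g (mjoin K y z) = mjoin N (g y) (g z)"
      using g_h h_g g_in bhom_join[OF assms(2)] bmod_join_closed[OF assms(1)] by metis
  next
    fix S y assume "S \<in> BA Ap" "y \<in> mcar K"
    then show "g (mact K S y) = mact N S (g y)"
      using g_h h_g g_in bhom_act[OF assms(2)] bmod_act_closed[OF assms(1)] by metis
  qed (use g_in in blast)
  then show ?thesis
    unfolding bmod_iso_def using g_bij by blast
qed

section \<open>Partially ordered \<open>A\<close>-modules and \<open>B(M, \<le>)\<close>\<close>

locale po_amodule =
  fixes Ap :: "'a::{comm_monoid_mult, mult_zero} set" and M :: "'m set" and pt :: 'm
    and ac :: "'a \<Rightarrow> 'm \<Rightarrow> 'm" and le :: "'m \<Rightarrow> 'm \<Rightarrow> bool"
  assumes F1: "F1_pair Ap" and po: "po_amod Ap M pt ac le"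
begin

lemma pt_in: "pt \<in> M"
  and ac_in: "x \<in> M \<Longrightarrow> ac f x \<in> M"
  and ac_one: "x \<in> M \<Longrightarrow> ac 1 x = x"
  and ac_mult: "x \<in> M \<Longrightarrow> ac (f * g) x = ac f (ac g x)"
  and ac_zero: "x \<in> M \<Longrightarrow> ac 0 x = pt"
  and ac_pt: "ac f pt = pt"
  using po unfolding po_amod_def amod_def by simp_all

lemma le_refl: "x \<in> M \<Longrightarrow> le x x"
  using po unfolding po_amod_def by meson

lemma le_antisym: "x \<in> M \<Longrightarrow> y \<in> M \<Longrightarrow> le x y \<Longrightarrow> le y x \<Longrightarrow> x = y"
  using po unfolding po_amod_def by meson

lemma le_trans: "x \<in> M \<Longrightarrow> y \<in> M \<Longrightarrow> z \<in> M \<Longrightarrow> le x y \<Longrightarrow> le y z \<Longrightarrow> le x z"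
  using po unfolding po_amod_def by meson

lemma ac_mono: "x \<in> M \<Longrightarrow> y \<in> M \<Longrightarrow> le x y \<Longrightarrow> le (ac f x) (ac f y)"
  using po unfolding po_amod_def by meson

lemma ac_mult_le:
  assumes "h \<in> Ap" and "x \<in> M"
  shows "le (ac (h * g) x) (ac g x)"
proof -
  have "\<forall>f g. \<forall>v\<in>M. (\<exists>h\<in>Ap. f = h * g) \<longrightarrow> le (ac f v) (ac g v)"
    using po unfolding po_amod_def by (elim conjE) assumption
  then show ?thesis
    using assms by blast
qed

lemma ac_le: "h \<in> Ap \<Longrightarrow> x \<in> M \<Longrightarrow> le (ac h x) x"
  using ac_mult_le[of h x 1] ac_one by simp

lemma pt_le: "x \<in> M \<Longrightarrow> le pt x"
  using ac_le[OF F1_pair_zero[OF F1], of x] ac_zero[of x] by simp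

lemma ac_fgA_cases:
  assumes "f \<in> fgA Ap H" and "x \<in> M"
  obtains "ac f x = pt" | h where "h \<in> H" and "le (ac f x) (ac h x)"
  using assms(1)
proof (cases rule: fgA_memE)
  case 1
  then show ?thesis
    using that(1) ac_zero[OF assms(2)] by simp
next
  case (2 a h)
  then show ?thesis
    using that(2) ac_mult_le[OF _ assms(2)] by simp
qed

lemma down_subset: "down M le X \<subseteq> M"
  unfolding down_def by blast

lemma subset_down: "X \<subseteq> M \<Longrightarrow> X \<subseteq> down M le X"
  unfolding down_def using le_refl by blast

lemma down_union: "down M le (X \<union> Y) = down M le X \<union> down M le Y"
  unfolding down_def by blast

lemma down_mono: "X \<subseteq> Y \<Longrightarrow> down M le X \<subseteq> down M le Y"
  unfolding down_def by blast

lemma down_lower: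
  assumes "X \<subseteq> M" and "y \<in> down M le X" and "z \<in> M" and "le z y"
  shows "z \<in> down M le X"
proof -
  obtain x where "x \<in> X" "y \<in> M" "le y x"
    using assms(2) unfolding down_def by blast
  then have "le z x"
    using assms le_trans[of z y x] by blast
  then show ?thesis
    using \<open>x \<in> X\<close> assms(3) unfolding down_def by blast
qed

lemma down_subset_down:
  assumes "X \<subseteq> M" and "Y \<subseteq> M" and "\<And>x. x \<in> X \<Longrightarrow> \<exists>y\<in>Y. le x y"
  shows "down M le X \<subseteq> down M le Y"
proof
  fix z assume "z \<in> down M le X"
  then obtain x where "z \<in> M" "x \<in> X" "le z x"
    unfolding down_def by blast
  with assms obtain y where "y \<in> Y" "le x y"
    by blast
  moreover have "le z y"
    using assms \<open>y \<in> Y\<close> \<open>le x y\<close> \<open>z \<in> M\<close> \<open>x \<in> X\<close> \<open>le z x\<close> le_trans[of z x y] by blast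
  ultimately show "z \<in> down M le Y"
    using \<open>z \<in> M\<close> unfolding down_def by blast
qed

lemma down_idem:
  assumes "X \<subseteq> M"
  shows "down M le (down M le X) = down M le X"
proof
  show "down M le (down M le X) \<subseteq> down M le X"
  proof
    fix z assume "z \<in> down M le (down M le X)"
    then obtain y where "y \<in> down M le X" "z \<in> M" "le z y"
      unfolding down_def[of M le "down M le X"] by blast
    then show "z \<in> down M le X"
      using down_lower[OF assms] by blast
  qed
  show "down M le X \<subseteq> down M le (down M le X)"
    using subset_down[OF down_subset] .
qed

lemma down_pt: "down M le {pt} = {pt}"
  unfolding down_def using pt_in pt_le le_refl le_antisym by blast

definition maximals :: "'m set \<Rightarrow> 'm set" where
  "maximals G = {m \<in> G. \<forall>m'\<in>G. le m m' \<longrightarrow> m' = m}"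

lemma exists_maximal_above:
  assumes "finite G" and "G \<subseteq> M" and "g \<in> G"
  shows "\<exists>m\<in>maximals G. le g m"
proof -
  let ?A = "{m \<in> G. le g m}"
  let ?R = "\<lambda>a b. le a b \<and> a \<noteq> b"
  have "asymp_on ?A ?R"
    using assms(2) le_antisym by (auto intro!: asymp_onI)
  moreover have "transp_on ?A ?R"
    using assms(2) le_antisym le_trans
    by (intro transp_onI) (metis (no_types, lifting) mem_Collect_eq subsetD)
  moreover have "?A \<noteq> {}"
    using assms le_refl by blast
  ultimately obtain m where m: "m \<in> ?A" "\<forall>x\<in>?A. x \<noteq> m \<longrightarrow> \<not> ?R m x"
    using Finite_Set.bex_max_element[of ?A ?R] assms(1) by auto
  have "m' = m" if "m' \<in> G" "le m m'" for m'
    using m that assms(2,3) le_trans[of g m m'] by blast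
  then show ?thesis
    using m unfolding maximals_def by blast
qed

lemma down_maximals:
  assumes "finite G" and "G \<subseteq> M"
  shows "down M le (maximals G) = down M le G"
proof
  show "down M le (maximals G) \<subseteq> down M le G"
    unfolding maximals_def by (intro down_mono) blast
  have "maximals G \<subseteq> M"
    using assms(2) unfolding maximals_def by blast
  then show "down M le G \<subseteq> down M le (maximals G)"
    using down_subset_down[OF assms(2)] exists_maximal_above[OF assms] by blast
qed

lemma down_gen_sub:
  assumes "G \<subseteq> M"
  shows "down M le (gen_sub Ap pt ac G) = down M le (insert pt G)"
proof
  have "g \<in> gen_sub Ap pt ac G" if "g \<in> G" for g
  proof -
    have "g = ac 1 g"
      using that assms ac_one by auto
    then show ?thesis
      using that F1_pair_one[OF F1] unfolding gen_sub_def by blast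
  qed
  then have "insert pt G \<subseteq> gen_sub Ap pt ac G"
    unfolding gen_sub_def by blast
  then show "down M le (insert pt G) \<subseteq> down M le (gen_sub Ap pt ac G)"
    unfolding down_def by blast
  have "\<exists>y\<in>insert pt G. le x y" if x: "x \<in> gen_sub Ap pt ac G" for x
  proof -
    consider "x = pt" | h g where "h \<in> Ap" "g \<in> G" "x = ac h g"
      using x unfolding gen_sub_def by blast
    then show ?thesis
    proof cases
      case 1
      then show ?thesis using pt_in le_refl by blast
    next
      case 2
      then show ?thesis using assms ac_le by blast
    qed
  qed
  moreover have "gen_sub Ap pt ac G \<subseteq> M"
    using assms pt_in ac_in unfolding gen_sub_def by blast
  ultimately show "down M le (gen_sub Ap pt ac G) \<subseteq> down M le (insert pt G)"
    using down_subset_down[of "gen_sub Ap pt ac G" "insert pt G"] assms pt_in by blast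
qed

lemma down_in_BM:
  assumes "finite G" and "G \<subseteq> M"
  shows "down M le (insert pt G) \<in> BM Ap M pt ac le"
  unfolding BM_def
proof (intro CollectI conjI ballI impI)
  let ?S = "down M le (insert pt G)"
  have gens: "insert pt G \<subseteq> M"
    using assms pt_in by blast
  show "?S \<subseteq> M"
    by (rule down_subset)
  show "pt \<in> ?S"
    using subset_down[OF gens] by blast
  show "y \<in> ?S" if "x \<in> ?S" "y \<in> M" "le y x" for x y
    using down_lower[OF gens that] .
  show "ac h x \<in> ?S" if "h \<in> Ap" "x \<in> ?S" for h x
  proof -
    have "x \<in> M"
      using that down_subset by blast
    then show ?thesis
      using down_lower[OF gens \<open>x \<in> ?S\<close> ac_in ac_le[OF \<open>h \<in> Ap\<close>]] by blast
  qed
  show "\<exists>G'. finite G' \<and> G' \<subseteq> M \<and> ?S = down M le (gen_sub Ap pt ac G')"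
    using assms down_gen_sub[OF assms(2)] by blast
qed

lemma BM_eq: "BM Ap M pt ac le = {down M le (insert pt G) | G. finite G \<and> G \<subseteq> M}"
proof (intro set_eqI iffI)
  fix S assume "S \<in> BM Ap M pt ac le"
  then obtain G where "finite G" "G \<subseteq> M" "S = down M le (gen_sub Ap pt ac G)"
    unfolding BM_def by blast
  then show "S \<in> {down M le (insert pt G) | G. finite G \<and> G \<subseteq> M}"
    using down_gen_sub by blast
qed (use down_in_BM in blast)

lemma BM_subset: "S \<in> BM Ap M pt ac le \<Longrightarrow> S \<subseteq> M"
  and pt_in_BM: "S \<in> BM Ap M pt ac le \<Longrightarrow> pt \<in> S"
  unfolding BM_def by simp_all

lemma BM_down_eq:
  assumes "S \<in> BM Ap M pt ac le"
  shows "down M le S = S"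
proof -
  obtain G where "G \<subseteq> M" "S = down M le (insert pt G)"
    using assms unfolding BM_eq by blast
  then show ?thesis
    using down_idem[of "insert pt G"] pt_in by simp
qed

lemma BM_union: "S \<in> BM Ap M pt ac le \<Longrightarrow> T \<in> BM Ap M pt ac le \<Longrightarrow> S \<union> T \<in> BM Ap M pt ac le"
proof -
  assume "S \<in> BM Ap M pt ac le" "T \<in> BM Ap M pt ac le"
  then obtain G H where "finite G" "G \<subseteq> M" "S = down M le (insert pt G)"
    and "finite H" "H \<subseteq> M" "T = down M le (insert pt H)"
    unfolding BM_eq by blast
  moreover have "insert pt G \<union> insert pt H = insert pt (G \<union> H)"
    by blast
  ultimately show "S \<union> T \<in> BM Ap M pt ac le"
    using down_in_BM[of "G \<union> H"] down_union[of "insert pt G" "insert pt H"] by simp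
qed

definition act :: "'a set \<Rightarrow> 'm set \<Rightarrow> 'm set" where
  "act F S = down M le {ac f x | f x. f \<in> F \<and> x \<in> S}"

lemma BM_mod_simps [simp]:
  "mcar (BM_mod Ap M pt ac le) = BM Ap M pt ac le"
  "mjoin (BM_mod Ap M pt ac le) = (\<union>)"
  "mzero (BM_mod Ap M pt ac le) = {pt}"
  "mact (BM_mod Ap M pt ac le) = act"
  unfolding BM_mod_def act_def by (simp_all add: fun_eq_iff)

lemma act_union_left: "act (F \<union> F') S = act F S \<union> act F' S"
  and act_union_right: "act F (S \<union> T) = act F S \<union> act F T"
  unfolding act_def down_def by blast+

lemma act_down:
  assumes "X \<subseteq> M"
  shows "act F (down M le X) = act F X"
proof
  show "act F X \<subseteq> act F (down M le X)"
    unfolding act_def using subset_down[OF assms] by (intro down_mono) blast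
  have "\<exists>y\<in>{ac f x | f x. f \<in> F \<and> x \<in> X}. le z y"
    if "z \<in> {ac f y | f y. f \<in> F \<and> y \<in> down M le X}" for z
  proof -
    obtain f y x where "z = ac f y" "f \<in> F" "y \<in> M" "x \<in> X" "le y x"
      using \<open>z \<in> _\<close> unfolding down_def by blast
    then show ?thesis
      using ac_mono[of y x f] assms by blast
  qed
  then show "act F (down M le X) \<subseteq> act F X"
    unfolding act_def using assms down_subset ac_in
    by (intro down_subset_down) blast+
qed

lemma act_fgA:
  assumes "X \<subseteq> M" and "X \<noteq> {}"
  shows "act (fgA Ap H) X = down M le (insert pt ((\<lambda>(h, x). ac h x) ` (H \<times> X)))"
proof -
  let ?I = "{ac f x | f x. f \<in> fgA Ap H \<and> x \<in> X}"
  let ?R = "insert pt ((\<lambda>(h, x). ac h x) ` (H \<times> X))"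
  have R_M: "?R \<subseteq> M"
    using assms(1) pt_in ac_in by auto
  have I_M: "?I \<subseteq> M"
    using assms(1) ac_in by blast
  have "pt \<in> ?I"
  proof -
    obtain x where "x \<in> X"
      using assms(2) by blast
    then have "pt = ac 0 x"
      using assms(1) ac_zero by auto
    then show ?thesis
      using \<open>x \<in> X\<close> zero_in_fgA by blast
  qed
  moreover have "ac h x \<in> ?I" if "h \<in> H" "x \<in> X" for h x
    using that generator_in_fgA[OF F1_pair_one[OF F1]] by blast
  ultimately have "?R \<subseteq> ?I"
    by (auto simp del: mem_Collect_eq)
  moreover have "\<exists>y\<in>?R. le z y" if "z \<in> ?I" for z
  proof -
    obtain f x where z: "z = ac f x" "f \<in> fgA Ap H" "x \<in> X"
      using \<open>z \<in> ?I\<close> by blast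
    have "x \<in> M"
      using z(3) assms(1) by blast
    with z(2) show ?thesis
    proof (cases rule: ac_fgA_cases)
      case 1
      then show ?thesis
        using z(1) pt_in le_refl by blast
    next
      case (2 h)
      then show ?thesis
        using z by blast
    qed
  qed
  ultimately show ?thesis
    unfolding act_def using R_M I_M down_mono[of ?R ?I] down_subset_down[of ?I ?R]
    by (intro subset_antisym) simp_all
qed

lemma act_in_BM:
  assumes "F \<in> BA Ap" and "S \<in> BM Ap M pt ac le"
  shows "act F S \<in> BM Ap M pt ac le"
proof -
  obtain H where H: "finite H" "F = fgA Ap H"
    using assms(1) unfolding BA_def by blast
  obtain G where G: "finite G" "G \<subseteq> M" "S = down M le (insert pt G)"
    using assms(2) unfolding BM_eq by blast
  have gens: "insert pt G \<subseteq> M"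
    using G(2) pt_in by blast
  let ?G' = "(\<lambda>(h, x). ac h x) ` (H \<times> insert pt G)"
  have "act F S = down M le (insert pt ?G')"
    using act_down[OF gens] act_fgA[OF gens] H(2) G(3) by simp
  moreover have "finite ?G'" "?G' \<subseteq> M"
    using H(1) G(1) gens ac_in by auto
  ultimately show ?thesis
    using down_in_BM by simp
qed

lemma act_setmult:
  assumes "X \<subseteq> M"
  shows "act (setmult F F') X = act F (act F' X)"
proof -
  let ?I = "{ac g x | g x. g \<in> F' \<and> x \<in> X}"
  have I_M: "?I \<subseteq> M"
    using assms ac_in by blast
  have "{ac f y | f y. f \<in> F \<and> y \<in> ?I} = {ac k x | k x. k \<in> setmult F F' \<and> x \<in> X}"
  proof (intro set_eqI iffI)
    fix z assume "z \<in> {ac f y | f y. f \<in> F \<and> y \<in> ?I}"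
    then obtain f g x where "z = ac f (ac g x)" "f \<in> F" "g \<in> F'" "x \<in> X"
      by blast
    moreover have "x \<in> M"
      using assms \<open>x \<in> X\<close> by blast
    ultimately have "z = ac (f * g) x" "f \<in> F" "g \<in> F'" "x \<in> X"
      using ac_mult by simp_all
    then show "z \<in> {ac k x | k x. k \<in> setmult F F' \<and> x \<in> X}"
      unfolding setmult_def by blast
  next
    fix z assume "z \<in> {ac k x | k x. k \<in> setmult F F' \<and> x \<in> X}"
    then obtain f g x where "z = ac f (ac g x)" "f \<in> F" "g \<in> F'" "x \<in> X"
      using assms ac_mult unfolding setmult_def by blast
    then show "z \<in> {ac f y | f y. f \<in> F \<and> y \<in> ?I}"
      by blast
  qed
  then show ?thesis
    using act_down[OF I_M, of F] unfolding act_def by simp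
qed

lemma act_one:
  assumes "S \<in> BM Ap M pt ac le"
  shows "act (fgA Ap {1}) S = S"
proof -
  have "(\<lambda>(h, x). ac h x) ` ({1} \<times> S) = S"
    using BM_subset[OF assms] ac_one by (force simp: image_iff)
  moreover have "S \<noteq> {}"
    using pt_in_BM[OF assms] by blast
  ultimately show ?thesis
    using act_fgA[OF BM_subset[OF assms], of "{1}"] pt_in_BM[OF assms] BM_down_eq[OF assms]
    by (simp add: insert_absorb)
qed

lemma act_zero:
  assumes "S \<in> BM Ap M pt ac le"
  shows "act {0} S = {pt}"
proof -
  have "{ac f x | f x. f \<in> {0} \<and> x \<in> S} = {pt}"
    using BM_subset[OF assms] pt_in_BM[OF assms] ac_zero by (auto intro!: exI[of _ pt])
  then show ?thesis
    unfolding act_def using down_pt by simp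
qed

lemma act_pt: "0 \<in> F \<Longrightarrow> act F {pt} = {pt}"
proof -
  assume "0 \<in> F"
  then have "{ac f x | f x. f \<in> F \<and> x \<in> {pt}} = {pt}"
    using ac_pt by auto
  then show ?thesis
    unfolding act_def using down_pt by simp
qed

lemma is_bmod_BM_mod: "is_bmod Ap (BM_mod Ap M pt ac le)"
  unfolding is_bmod_def BM_mod_simps
proof (intro conjI ballI)
  show "{pt} \<in> BM Ap M pt ac le"
    using down_in_BM[of "{}"] down_pt by simp
  show "S \<union> T \<in> BM Ap M pt ac le" if "S \<in> BM Ap M pt ac le" "T \<in> BM Ap M pt ac le" for S T
    using BM_union[OF that] .
  show "act F S \<in> BM Ap M pt ac le" if "F \<in> BA Ap" "S \<in> BM Ap M pt ac le" for F S
    using act_in_BM[OF that] .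
  show "{pt} \<union> S = S" if "S \<in> BM Ap M pt ac le" for S
    using pt_in_BM[OF that] by blast
  show "act (setmult F F') S = act F (act F' S)" if "S \<in> BM Ap M pt ac le" for F F' S
    using act_setmult[OF BM_subset[OF that]] .
  show "act (fgA Ap {1}) S = S" if "S \<in> BM Ap M pt ac le" for S
    using act_one[OF that] .
  show "act {0} S = {pt}" if "S \<in> BM Ap M pt ac le" for S
    using act_zero[OF that] .
  show "act F {pt} = {pt}" if "F \<in> BA Ap" for F
    using act_pt that unfolding BA_def by auto
qed (auto simp: act_union_left act_union_right)

end

section \<open>The natural order on a \<open>B[A;A\<^sup>+]\<close>-module\<close>

locale bmodule =
  fixes Ap :: "'a::{comm_monoid_mult, mult_zero} set" and P :: "('a, 'p) bmod"
  assumes F1: "F1_pair Ap" and bmod: "is_bmod Ap P"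
begin

abbreviation C where "C \<equiv> mcar P"
abbreviation J where "J \<equiv> mjoin P"
abbreviation Z where "Z \<equiv> mzero P"

definition ac :: "'a \<Rightarrow> 'p \<Rightarrow> 'p" where
  "ac f x = mact P (fgA Ap {f}) x"

definition le :: "'p \<Rightarrow> 'p \<Rightarrow> bool" where
  "le x y \<longleftrightarrow> J x y = y"

lemma J_idem: "x \<in> C \<Longrightarrow> J x x = x"
  using bmod_act_union[OF bmod fgA_in_BA fgA_in_BA, of "{1}" "{1}" x] bmod_act_one[OF bmod]
  by simp

lemma le_refl: "x \<in> C \<Longrightarrow> le x x"
  by (simp add: le_def J_idem)

lemma le_antisym: "x \<in> C \<Longrightarrow> y \<in> C \<Longrightarrow> le x y \<Longrightarrow> le y x \<Longrightarrow> x = y"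
  unfolding le_def using bmod_join_commute[OF bmod, of x y] by simp

lemma le_trans:
  assumes "x \<in> C" "y \<in> C" "z \<in> C" and "le x y" "le y z"
  shows "le x z"
proof -
  have "J x z = J (J x y) z"
    using assms bmod_join_assoc[OF bmod, of x y z] unfolding le_def by simp
  also have "\<dots> = z"
    using assms unfolding le_def by simp
  finally show ?thesis
    unfolding le_def .
qed

lemma Z_le: "x \<in> C \<Longrightarrow> le Z x"
  by (simp add: le_def bmod_zero_join[OF bmod])

lemma le_join_left: "x \<in> C \<Longrightarrow> y \<in> C \<Longrightarrow> le x (J x y)"
  unfolding le_def using bmod_join_assoc[OF bmod, of x x y] J_idem by simp

lemma le_join_right: "x \<in> C \<Longrightarrow> y \<in> C \<Longrightarrow> le y (J x y)"
  using le_join_left[of y x] bmod_join_commute[OF bmod, of x y] by simp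

lemma join_least:
  assumes "x \<in> C" "y \<in> C" "v \<in> C" and "le x v" "le y v"
  shows "le (J x y) v"
  using assms bmod_join_assoc[OF bmod, of x y v] unfolding le_def by simp

lemma ac_in: "x \<in> C \<Longrightarrow> ac f x \<in> C"
  unfolding ac_def by (simp add: bmod_act_closed[OF bmod] fgA_in_BA)

lemma ac_mult: "x \<in> C \<Longrightarrow> ac (f * g) x = ac f (ac g x)"
  unfolding ac_def
  by (metis bmod_act_setmult[OF bmod] setmult_fgA_singleton[OF F1] fgA_in_BA finite.emptyI
      finite.insertI)

lemma ac_join: "x \<in> C \<Longrightarrow> y \<in> C \<Longrightarrow> ac f (J x y) = J (ac f x) (ac f y)"
  unfolding ac_def by (simp add: bmod_act_join[OF bmod] fgA_in_BA)

lemma ac_Z: "ac f Z = Z"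
  unfolding ac_def by (simp add: bmod_act_mzero[OF bmod] fgA_in_BA)

lemma ac_one: "x \<in> C \<Longrightarrow> ac 1 x = x"
  unfolding ac_def by (rule bmod_act_one[OF bmod])

lemma ac_zero: "x \<in> C \<Longrightarrow> ac 0 x = Z"
  unfolding ac_def by (simp add: bmod_act_zero[OF bmod])

lemma ac_mult_le:
  assumes "h \<in> Ap" and "v \<in> C"
  shows "le (ac (h * g) v) (ac g v)"
proof -
  have "J (ac (h * g) v) (ac g v) = mact P (fgA Ap {h * g} \<union> fgA Ap {g}) v"
    unfolding ac_def using bmod_act_union[OF bmod fgA_in_BA fgA_in_BA assms(2)] by simp
  also have "fgA Ap {h * g} \<union> fgA Ap {g} = fgA Ap {g}"
    using fgA_singleton_mult_subset[OF F1 assms(1)] by blast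
  finally show ?thesis
    unfolding le_def ac_def .
qed

lemma ac_mono: "v \<in> C \<Longrightarrow> w \<in> C \<Longrightarrow> le v w \<Longrightarrow> le (ac f v) (ac f w)"
  unfolding le_def by (metis ac_join)

lemma po_amod_submodule:
  assumes "M \<subseteq> C" and "Z \<in> M" and "\<And>f x. x \<in> M \<Longrightarrow> ac f x \<in> M"
  shows "po_amod Ap M Z ac le"
  unfolding po_amod_def amod_def
  apply (intro conjI allI ballI impI)
  subgoal by (rule assms(2))
  subgoal by (rule assms(3))
  subgoal using assms(1) ac_one by blast
  subgoal using assms(1) ac_mult by blast
  subgoal using assms(1) ac_zero by blast
  subgoal by (rule ac_Z)
  subgoal using assms(1) le_refl by blast
  subgoal using assms(1) le_antisym by blast
  subgoal for x y z using assms(1) le_trans[of x y z] by blast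
  subgoal using assms(1) ac_mult_le by blast
  subgoal using assms(1) ac_mono by blast
  done

sublocale ord: po_amodule Ap C Z ac le
  using F1 po_amod_submodule[OF order_refl bmod_zero_closed[OF bmod] ac_in]
  by unfold_locales

definition join_list :: "'p list \<Rightarrow> 'p" where
  "join_list xs = foldr J xs Z"

lemma join_list_Nil [simp]: "join_list [] = Z"
  and join_list_Cons [simp]: "join_list (x # xs) = J x (join_list xs)"
  unfolding join_list_def by simp_all

lemma join_list_in: "set xs \<subseteq> C \<Longrightarrow> join_list xs \<in> C"
  by (induction xs) (simp_all add: bmod_zero_closed[OF bmod] bmod_join_closed[OF bmod])

lemma join_list_append:
  "set xs \<subseteq> C \<Longrightarrow> set ys \<subseteq> C \<Longrightarrow> join_list (xs @ ys) = J (join_list xs) (join_list ys)"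
  by (induction xs)
    (simp_all add: join_list_in bmod_zero_join[OF bmod] bmod_join_assoc[OF bmod])

lemma join_list_concat:
  "set (concat xss) \<subseteq> C \<Longrightarrow> join_list (concat xss) = join_list (map join_list xss)"
  by (induction xss) (simp_all add: join_list_append)

lemma ac_join_list: "set xs \<subseteq> C \<Longrightarrow> ac f (join_list xs) = join_list (map (ac f) xs)"
  by (induction xs) (simp_all add: ac_Z ac_join join_list_in)

lemma mact_fgA_set: "x \<in> C \<Longrightarrow> mact P (fgA Ap (set hs)) x = join_list (map (\<lambda>h. ac h x) hs)"
proof (induction hs)
  case Nil
  then show ?case
    by (simp add: bmod_act_zero[OF bmod])
next
  case (Cons h hs)
  then show ?case
    using bmod_act_union[OF bmod fgA_in_BA fgA_in_BA Cons.prems, of "{h}" "set hs"]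
    by (simp add: fgA_insert[of Ap h "set hs"] ac_def)
qed

definition is_lub :: "'p set \<Rightarrow> 'p \<Rightarrow> bool" where
  "is_lub S u \<longleftrightarrow> u \<in> C \<and> (\<forall>y\<in>S. le y u) \<and> (\<forall>v\<in>C. (\<forall>y\<in>S. le y v) \<longrightarrow> le u v)"

definition lub :: "'p set \<Rightarrow> 'p" where
  "lub S = (THE u. is_lub S u)"

lemma lub_eqI: "is_lub S u \<Longrightarrow> lub S = u"
  unfolding lub_def is_lub_def by (rule the_equality) (auto intro: le_antisym)

lemma is_lub_join_list: "set xs \<subseteq> C \<Longrightarrow> is_lub (insert Z (set xs)) (join_list xs)"
proof (induction xs)
  case Nil
  then show ?case
    unfolding is_lub_def using bmod_zero_closed[OF bmod] le_refl Z_le by simp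
next
  case (Cons x xs)
  then have x: "x \<in> C" and xs: "set xs \<subseteq> C" and u: "join_list xs \<in> C"
    using join_list_in by auto
  have IH: "is_lub (insert Z (set xs)) (join_list xs)"
    using Cons.IH[OF xs] .
  have "le y (J x (join_list xs))" if "y \<in> insert Z (set (x # xs))" for y
  proof -
    have "y = x \<or> (y \<in> C \<and> le y (join_list xs))"
      using that IH xs bmod_zero_closed[OF bmod] unfolding is_lub_def by auto
    then show ?thesis
      using le_join_left[OF x u] le_join_right[OF x u] le_trans bmod_join_closed[OF bmod x u] u
      by blast
  qed
  moreover have "le (J x (join_list xs)) v"
    if "v \<in> C" "\<forall>y\<in>insert Z (set (x # xs)). le y v" for v
    using that IH join_least[OF x u] unfolding is_lub_def by simp
  ultimately show ?case
    unfolding is_lub_def using bmod_join_closed[OF bmod x u] by simp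
qed

lemma is_lub_down:
  assumes "X \<subseteq> C"
  shows "is_lub (down C le X) u \<longleftrightarrow> is_lub X u"
proof -
  have "(\<forall>y\<in>down C le X. le y v) \<longleftrightarrow> (\<forall>y\<in>X. le y v)" if "v \<in> C" for v
  proof
    assume "\<forall>y\<in>down C le X. le y v"
    then show "\<forall>y\<in>X. le y v"
      using ord.subset_down[OF assms] by blast
  next
    assume bound: "\<forall>y\<in>X. le y v"
    show "\<forall>y\<in>down C le X. le y v"
    proof
      fix y assume "y \<in> down C le X"
      then obtain x where "y \<in> C" "x \<in> X" "le y x"
        unfolding down_def by blast
      then show "le y v"
        using bound assms that le_trans[of y x v] by blast
    qed
  qed
  then show ?thesis
    unfolding is_lub_def by (metis (no_types, lifting))
qed

lemma lub_down_join_list: "set xs \<subseteq> C \<Longrightarrow> lub (down C le (insert Z (set xs))) = join_list xs"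
  using is_lub_join_list is_lub_down[of "insert Z (set xs)"] bmod_zero_closed[OF bmod]
  by (simp add: lub_eqI)

lemma BM_obtain_list:
  assumes "S \<in> BM Ap C Z ac le"
  obtains xs where "set xs \<subseteq> C" and "S = down C le (insert Z (set xs))"
  using assms finite_list unfolding ord.BM_eq by blast

lemma lub_act:
  assumes "F \<in> BA Ap" and "S \<in> BM Ap C Z ac le"
  shows "lub (ord.act F S) = mact P F (lub S)"
proof -
  obtain hs where F: "F = fgA Ap (set hs)"
    using BA_obtain_list[OF assms(1)] .
  obtain xs where xs: "set xs \<subseteq> C" "S = down C le (insert Z (set xs))"
    using BM_obtain_list[OF assms(2)] .
  have gens: "set (Z # xs) \<subseteq> C"
    using xs(1) bmod_zero_closed[OF bmod] by simp
  let ?ys = "concat (map (\<lambda>h. map (ac h) (Z # xs)) hs)"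
  have ys: "set ?ys \<subseteq> C"
    using gens ac_in by auto
  have "set ?ys = (\<lambda>(h, x). ac h x) ` (set hs \<times> set (Z # xs))"
    by auto
  then have "ord.act F S = down C le (insert Z (set ?ys))"
    using ord.act_down[OF gens] ord.act_fgA[OF gens] F xs(2) by simp
  then have "lub (ord.act F S) = join_list ?ys"
    using lub_down_join_list[OF ys] by simp
  also have "\<dots> = join_list (map (\<lambda>h. ac h (join_list (Z # xs))) hs)"
    using join_list_concat[OF ys] ac_join_list[OF gens] by (simp add: comp_def)
  also have "\<dots> = mact P F (join_list (Z # xs))"
    using mact_fgA_set[OF join_list_in[OF gens]] F by simp
  also have "join_list (Z # xs) = lub S"
    using lub_down_join_list[OF xs(1)] xs(2) join_list_in[OF xs(1)] bmod_zero_join[OF bmod] by simp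
  finally show ?thesis .
qed

lemma lub_in: "S \<in> BM Ap C Z ac le \<Longrightarrow> lub S \<in> C"
  by (elim BM_obtain_list) (simp add: lub_down_join_list join_list_in)

lemma lub_union:
  assumes "S \<in> BM Ap C Z ac le" and "T \<in> BM Ap C Z ac le"
  shows "lub (S \<union> T) = J (lub S) (lub T)"
proof -
  obtain xs where xs: "set xs \<subseteq> C" "S = down C le (insert Z (set xs))"
    using BM_obtain_list[OF assms(1)] .
  obtain ys where ys: "set ys \<subseteq> C" "T = down C le (insert Z (set ys))"
    using BM_obtain_list[OF assms(2)] .
  have "S \<union> T = down C le (insert Z (set (xs @ ys)))"
    using xs(2) ys(2) ord.down_union[of "insert Z (set xs)" "insert Z (set ys)"]
    by (simp add: insert_absorb2 Un_insert_left Un_insert_right)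
  then show ?thesis
    using xs ys lub_down_join_list[of "xs @ ys"] lub_down_join_list[of xs] lub_down_join_list[of ys]
      join_list_append[OF xs(1) ys(1)] by simp
qed

lemma lub_bhom: "bhom Ap (BM_mod Ap C Z ac le) P lub"
  unfolding bhom_def ord.BM_mod_simps
  using lub_in lub_union lub_act lub_down_join_list[of "[]"] ord.down_pt by simp

lemma lub_surj: "lub ` BM Ap C Z ac le = C"
proof
  show "lub ` BM Ap C Z ac le \<subseteq> C"
    using lub_in by blast
  show "C \<subseteq> lub ` BM Ap C Z ac le"
  proof
    fix x assume x: "x \<in> C"
    let ?S = "down C le (insert Z (set [x]))"
    have "?S \<in> BM Ap C Z ac le"
      using ord.down_in_BM x by simp
    moreover have "lub ?S = x"
      using lub_down_join_list[of "[x]"] x bmod_join_commute[OF bmod] bmod_zero_join[OF bmod]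
        bmod_zero_closed[OF bmod] by simp
    ultimately show "x \<in> lub ` BM Ap C Z ac le"
      by force
  qed
qed

end

section \<open>Projective modules\<close>

definition transfer_bmod :: "('a, 'n) bmod \<Rightarrow> ('n \<Rightarrow> 'm) \<Rightarrow> ('m \<Rightarrow> 'n) \<Rightarrow> ('a, 'm) bmod" where
  "transfer_bmod N e d =
     \<lparr> mcar = e ` mcar N,
       mjoin = (\<lambda>x y. e (mjoin N (d x) (d y))),
       mzero = e (mzero N),
       mact = (\<lambda>F x. e (mact N F (d x))) \<rparr>"

context
  fixes N :: "('a::{comm_monoid_mult, mult_zero}, 'n) bmod" and e :: "'n \<Rightarrow> 'm" and d :: "'m \<Rightarrow> 'n"
  assumes d_e: "\<And>x. x \<in> mcar N \<Longrightarrow> d (e x) = x"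
begin

lemma is_bmod_transfer: "is_bmod Ap N \<Longrightarrow> is_bmod Ap (transfer_bmod N e d)"
  unfolding is_bmod_def transfer_bmod_def by (auto simp: d_e)

lemma bhom_transfer_left:
  assumes "is_bmod Ap N" and "bhom Ap N K p"
  shows "bhom Ap (transfer_bmod N e d) K (p \<circ> d)"
  using assms(2) unfolding bhom_def transfer_bmod_def
  by (auto simp: d_e bmod_zero_closed[OF assms(1)] bmod_join_closed[OF assms(1)]
      bmod_act_closed[OF assms(1)])

lemma image_transfer: "(p \<circ> d) ` mcar (transfer_bmod N e d) = p ` mcar N"
  unfolding transfer_bmod_def by (force simp: d_e)

lemma bhom_transfer_right:
  assumes "is_bmod Ap N" and "bhom Ap K (transfer_bmod N e d) s"
  shows "bhom Ap K N (d \<circ> s)"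
proof -
  have s_in: "d (s x) \<in> mcar N" if "x \<in> mcar K" for x
    using bhom_closed[OF assms(2) that] d_e by (auto simp: transfer_bmod_def)
  show ?thesis
    using assms(2) s_in unfolding bhom_def transfer_bmod_def
    by (auto simp: d_e bmod_zero_closed[OF assms(1)] bmod_join_closed[OF assms(1)]
        bmod_act_closed[OF assms(1)])
qed

end

text \<open>Projectivity is only tested against modules with carrier in \<open>'p \<Rightarrow> 'a set\<close>; a module on
  subsets of \<open>'p\<close> embeds there through \<open>S \<mapsto> (\<lambda>x. if x \<in> S then UNIV else {})\<close>.\<close>

lemma projective_lifts_surjection:
  fixes P :: "('a::{comm_monoid_mult, mult_zero}, 'p) bmod" and N :: "('a, 'p set) bmod"
  assumes "projective Ap P" and "is_bmod Ap N" and "bhom Ap N P p" and "p ` mcar N = mcar P"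
  shows "\<exists>s. bhom Ap P N s \<and> (\<forall>x\<in>mcar P. p (s x) = x)"
proof -
  define e :: "'p set \<Rightarrow> 'p \<Rightarrow> 'a set" where "e S = (\<lambda>x. if x \<in> S then UNIV else {})" for S
  define d :: "('p \<Rightarrow> 'a set) \<Rightarrow> 'p set" where "d T = {x. T x \<noteq> {}}" for T
  have d_e: "d (e S) = S" for S
    unfolding d_def e_def by auto
  obtain s where s: "bhom Ap P (transfer_bmod N e d) s" "\<forall>x\<in>mcar P. (p \<circ> d) (s x) = x"
    using assms d_e is_bmod_transfer bhom_transfer_left image_transfer
    unfolding projective_def by metis
  then show ?thesis
    using bhom_transfer_right[OF d_e assms(2) s(1)] by auto
qed

locale bmodule_section =
  bmodule Ap P for Ap :: "'a::{comm_monoid_mult, mult_zero} set" and P :: "('a, 'p) bmod" +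
  fixes s :: "'p \<Rightarrow> 'p set"
  assumes s_bhom: "bhom Ap P (BM_mod Ap (mcar P) (mzero P) ac le) s"
    and lub_s: "\<And>x. x \<in> mcar P \<Longrightarrow> lub (s x) = x"
begin

lemma s_in: "x \<in> C \<Longrightarrow> s x \<in> BM Ap C Z ac le"
  and s_Z: "s Z = {Z}"
  and s_join: "x \<in> C \<Longrightarrow> y \<in> C \<Longrightarrow> s (J x y) = s x \<union> s y"
  and s_act: "F \<in> BA Ap \<Longrightarrow> x \<in> C \<Longrightarrow> s (mact P F x) = ord.act F (s x)"
  using bhomD[OF s_bhom] by simp_all

lemma is_lub_s: "x \<in> C \<Longrightarrow> is_lub (s x) x"
proof -
  assume x: "x \<in> C"
  obtain xs where xs: "set xs \<subseteq> C" "s x = down C le (insert Z (set xs))"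
    using BM_obtain_list[OF s_in[OF x]] .
  then have "x = join_list xs"
    using lub_s[OF x] lub_down_join_list by simp
  then show ?thesis
    using xs is_lub_down is_lub_join_list bmod_zero_closed[OF bmod] by simp
qed

lemma mem_s_le: "x \<in> C \<Longrightarrow> y \<in> s x \<Longrightarrow> y \<in> C \<and> le y x"
  using is_lub_s ord.BM_subset[OF s_in] unfolding is_lub_def by blast

lemma s_join_list: "set xs \<subseteq> C \<Longrightarrow> s (join_list xs) = insert Z (\<Union> (s ` set xs))"
  by (induction xs) (auto simp: s_Z s_join join_list_in)

definition M :: "'p set" where
  "M = {x \<in> C. x \<in> s x}"

lemma M_subset: "M \<subseteq> C"
  unfolding M_def by blast

lemma s_M: "m \<in> M \<Longrightarrow> s m = down C le {m}"
proof
  assume m: "m \<in> M"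
  then have "m \<in> C" "m \<in> s m"
    unfolding M_def by auto
  show "s m \<subseteq> down C le {m}"
    using mem_s_le[OF \<open>m \<in> C\<close>] unfolding down_def by blast
  show "down C le {m} \<subseteq> s m"
    using ord.BM_down_eq[OF s_in[OF \<open>m \<in> C\<close>]] \<open>m \<in> s m\<close> unfolding down_def by blast
qed

lemma Z_in_M: "Z \<in> M"
  unfolding M_def using s_Z bmod_zero_closed[OF bmod] by simp

lemma ac_in_M:
  assumes "x \<in> M"
  shows "ac f x \<in> M"
proof -
  have x: "x \<in> C" "x \<in> s x"
    using assms unfolding M_def by auto
  have "ac f x \<in> {ac g y | g y. g \<in> fgA Ap {f} \<and> y \<in> s x}"
    using x(2) generator_in_fgA[OF F1_pair_one[OF F1]] by blast
  moreover have "{ac g y | g y. g \<in> fgA Ap {f} \<and> y \<in> s x} \<subseteq> C"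
    using ord.BM_subset[OF s_in[OF x(1)]] ac_in by blast
  ultimately have "ac f x \<in> ord.act (fgA Ap {f}) (s x)"
    unfolding ord.act_def using ord.subset_down by blast
  then show ?thesis
    unfolding M_def using s_act[OF fgA_in_BA x(1)] ac_in[OF x(1)] by (simp add: ac_def)
qed

lemma po_amod_M: "po_amod Ap M Z ac le"
  using po_amod_submodule[OF M_subset Z_in_M ac_in_M] .

sublocale Mord: po_amodule Ap M Z ac le
  using F1 po_amod_M by unfold_locales

lemma maximal_generator_in_M:
  assumes x: "x \<in> C" and xs: "set xs \<subseteq> C" "s x = down C le (insert Z (set xs))"
    and m: "m \<in> ord.maximals (set xs)"
  shows "m \<in> M"
proof -
  have "s x = insert Z (\<Union> (s ` set xs))"
    using lub_s[OF x] lub_down_join_list[OF xs(1)] xs s_join_list[OF xs(1)] by simp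
  moreover have "m \<in> s x"
    using m xs ord.subset_down[of "insert Z (set xs)"] bmod_zero_closed[OF bmod]
    unfolding ord.maximals_def by blast
  ultimately consider "m = Z" | g where "g \<in> set xs" "m \<in> s g"
    by blast
  then show ?thesis
  proof cases
    case 1
    then show ?thesis
      using Z_in_M by simp
  next
    case 2
    then have "le m g"
      using mem_s_le xs(1) by blast
    then have "g = m"
      using m 2(1) unfolding ord.maximals_def by blast
    then show ?thesis
      using 2 xs(1) unfolding M_def by blast
  qed
qed

lemma s_generated_in_M:
  assumes x: "x \<in> C"
  obtains G where "finite G" and "G \<subseteq> M" and "s x = down C le (insert Z G)"
proof -
  obtain xs where xs: "set xs \<subseteq> C" "s x = down C le (insert Z (set xs))"
    using BM_obtain_list[OF s_in[OF x]] .
  let ?G = "ord.maximals (set xs)"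
  have "finite ?G"
    unfolding ord.maximals_def by simp
  moreover have "?G \<subseteq> M"
    using maximal_generator_in_M[OF x xs] by blast
  moreover have "s x = down C le (insert Z ?G)"
  proof -
    have "down C le (insert Z (set xs)) = down C le {Z} \<union> down C le (set xs)"
      using ord.down_union[of "{Z}" "set xs"] by simp
    also have "\<dots> = down C le (insert Z ?G)"
      using ord.down_maximals[OF finite_set xs(1)] ord.down_union[of "{Z}" ?G] by simp
    finally show ?thesis
      using xs(2) by simp
  qed
  ultimately show ?thesis
    by (rule that)
qed

lemma down_inter_M: "down C le X \<inter> M = down M le X"
  unfolding down_def using M_subset by blast

lemma down_down_M:
  assumes "X \<subseteq> M"
  shows "down C le (down M le X) = down C le X"
proof
  show "down C le X \<subseteq> down C le (down M le X)"
    using Mord.subset_down[OF assms] by (rule ord.down_mono)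
  show "down C le (down M le X) \<subseteq> down C le X"
    using assms M_subset Mord.down_subset
    by (intro ord.down_subset_down) (auto simp: down_def)
qed

definition to_BM :: "'p \<Rightarrow> 'p set" where
  "to_BM x = s x \<inter> M"

lemma to_BM_generated:
  assumes "x \<in> C"
  obtains G where "finite G" and "G \<subseteq> M" and "to_BM x = down M le (insert Z G)"
    and "s x = down C le (insert Z G)"
  using s_generated_in_M[OF assms] down_inter_M unfolding to_BM_def by metis

lemma to_BM_in: "x \<in> C \<Longrightarrow> to_BM x \<in> BM Ap M Z ac le"
  by (elim to_BM_generated) (simp add: Mord.down_in_BM)

lemma s_eq_down_to_BM: "x \<in> C \<Longrightarrow> s x = down C le (to_BM x)"
  by (elim to_BM_generated) (simp add: down_down_M Z_in_M)

lemma inj_on_to_BM: "inj_on to_BM C"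
  by (rule inj_onI) (metis s_eq_down_to_BM lub_s)

lemma s_join_list_M:
  assumes "set xs \<subseteq> M"
  shows "s (join_list xs) = down C le (insert Z (set xs))"
proof -
  have "s ` set xs = (\<lambda>g. down C le {g}) ` set xs"
    using assms s_M by (intro image_cong) auto
  then have "s (join_list xs) = insert Z (\<Union>g\<in>set xs. down C le {g})"
    using s_join_list assms M_subset by (metis order_trans)
  also have "\<dots> = down C le {Z} \<union> down C le (set xs)"
    using ord.down_pt unfolding down_def[of C le "set xs"] down_def[of C le "{_}"] by auto
  also have "\<dots> = down C le (insert Z (set xs))"
    using ord.down_union[of "{Z}" "set xs"] by simp
  finally show ?thesis .
qed

lemma to_BM_surj: "to_BM ` C = BM Ap M Z ac le"
proof
  show "to_BM ` C \<subseteq> BM Ap M Z ac le"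
    using to_BM_in by blast
  show "BM Ap M Z ac le \<subseteq> to_BM ` C"
  proof
    fix D assume "D \<in> BM Ap M Z ac le"
    then obtain xs where xs: "set xs \<subseteq> M" "D = down M le (insert Z (set xs))"
      using finite_list unfolding Mord.BM_eq by blast
    then have "to_BM (join_list xs) = D"
      unfolding to_BM_def using s_join_list_M down_inter_M by simp
    moreover have "join_list xs \<in> C"
      using xs(1) M_subset join_list_in by blast
    ultimately show "D \<in> to_BM ` C"
      by blast
  qed
qed

lemma to_BM_act:
  assumes "F \<in> BA Ap" and "x \<in> C"
  shows "to_BM (mact P F x) = Mord.act F (to_BM x)"
proof -
  obtain G where G: "G \<subseteq> M" "to_BM x = down M le (insert Z G)" "s x = down C le (insert Z G)"
    using to_BM_generated[OF assms(2)] by metis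
  have gens: "insert Z G \<subseteq> M"
    using G(1) Z_in_M by blast
  have gens_C: "insert Z G \<subseteq> C"
    using gens M_subset by blast
  have "to_BM (mact P F x) = ord.act F (insert Z G) \<inter> M"
    unfolding to_BM_def s_act[OF assms] G(3) ord.act_down[OF gens_C] ..
  also have "\<dots> = Mord.act F (insert Z G)"
    unfolding ord.act_def Mord.act_def down_inter_M ..
  also have "\<dots> = Mord.act F (to_BM x)"
    using Mord.act_down[OF gens] G(2) by simp
  finally show ?thesis .
qed

lemma to_BM_bhom: "bhom Ap P (BM_mod Ap M Z ac le) to_BM"
  unfolding bhom_def Mord.BM_mod_simps
  using to_BM_in to_BM_act s_Z Z_in_M s_join unfolding to_BM_def by auto

lemma bmod_iso_BM_M: "bmod_iso Ap (BM_mod Ap M Z ac le) P"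
  using bmod_iso_if_bij_bhom[OF bmod to_BM_bhom] inj_on_to_BM to_BM_surj
  unfolding bij_betw_def by simp

end

theorem mainTheorem15:
  fixes Ap :: "('a::{comm_monoid_mult, mult_zero}) set"
    and P :: "('a, 'p) bmod"
  assumes "F1_pair Ap"
    and "projective Ap P"
  shows "\<exists>(M :: 'p set) pt ac le. po_amod Ap M pt ac le \<and> bmod_iso Ap (BM_mod Ap M pt ac le) P"
proof -
  have "is_bmod Ap P"
    using assms(2) unfolding projective_def by blast
  then interpret bmodule Ap P
    using assms(1) by unfold_locales
  obtain s where "bhom Ap P (BM_mod Ap C Z ac le) s" and "\<forall>x\<in>C. lub (s x) = x"
    using projective_lifts_surjection[OF assms(2) ord.is_bmod_BM_mod lub_bhom] lub_surj by auto
  then interpret bmodule_section Ap P s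
    by unfold_locales auto
  show ?thesis
    using po_amod_M bmod_iso_BM_M by blast
qed

end
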